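(* If $(T,R_T)$ is a rooted forest and $(F,R_F)\in \mathcal{L}(T)$, then $\rho(T,R_T)\le \rho(F,R_F)$.
   Context: A rooted graph $(F,R)$ is a graph $F$ with a set $R\subsetneq V(F)$ of roots; a rooted forest is a rooted graph whose graph is a forest. For $S\subseteq V(F)$, $e_S(F)$ is the number of edges of $F$ incident to a vertex of $S$, and $\rho(F,R)=\min_{\emptyset\ne S\subseteq V(F)\setminus R} e_S(F)/|S|$. For rooted graphs $(F,R),(F',R')$, a map $\phi:V(F)\to V(F')$ is a local isomorphism if (a) $\phi$ is surjective and $\phi(R)\subseteq R'$, (b) every edge $e\in E(F)$ has $\phi(e)\in E(F')$, and (c) every two distinct edges $e,f\in E(F)$ with $e\cap f\ne\emptyset$ satisfy $\phi(e)\ne\phi(f)$. $\mathcal{L}(T)$ denotes the set of rooted graphs $(F',R')$ such that there is a local isomorphism from $(T,R_T)$ to $(F',R')$. *)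

theory Defs
  imports Complex_Main
begin

definition graph :: "'a set \<Rightarrow> 'a set set \<Rightarrow> bool" where
  "graph V E \<longleftrightarrow> finite V \<and> (\<forall>e\<in>E. \<exists>u v. e = {u, v} \<and> u \<noteq> v \<and> u \<in> V \<and> v \<in> V)"

definition is_cycle :: "'a set \<Rightarrow> 'a set set \<Rightarrow> 'a list \<Rightarrow> bool" where
  "is_cycle V E cs \<longleftrightarrow> length cs \<ge> 3 \<and> distinct cs \<and> set cs \<subseteq> V \<and>
     (\<forall>i < length cs. {cs ! i, cs ! ((i + 1) mod length cs)} \<in> E)"

definition forest :: "'a set \<Rightarrow> 'a set set \<Rightarrow> bool" where
  "forest V E \<longleftrightarrow> graph V E \<and> (\<nexists>cs. is_cycle V E cs)"

definition rooted_graph :: "'a set \<Rightarrow> 'a set set \<Rightarrow> 'a set \<Rightarrow> bool" where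
  "rooted_graph V E R \<longleftrightarrow> graph V E \<and> R \<subset> V"

definition rooted_forest :: "'a set \<Rightarrow> 'a set set \<Rightarrow> 'a set \<Rightarrow> bool" where
  "rooted_forest V E R \<longleftrightarrow> forest V E \<and> R \<subset> V"

definition e_S :: "'a set set \<Rightarrow> 'a set \<Rightarrow> nat" where
  "e_S E S = card {e \<in> E. e \<inter> S \<noteq> {}}"

definition rho :: "'a set \<Rightarrow> 'a set set \<Rightarrow> 'a set \<Rightarrow> real" where
  "rho V E R = Min {real (e_S E S) / real (card S) | S. S \<noteq> {} \<and> S \<subseteq> V - R}"

definition local_iso ::
  "'a set \<Rightarrow> 'a set set \<Rightarrow> 'a set \<Rightarrow> 'b set \<Rightarrow> 'b set set \<Rightarrow> 'b set \<Rightarrow> ('a \<Rightarrow> 'b) \<Rightarrow> bool" where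
  "local_iso V E R V' E' R' \<phi> \<longleftrightarrow>
     \<phi> ` V = V' \<and> \<phi> ` R \<subseteq> R' \<and>
     (\<forall>e\<in>E. \<phi> ` e \<in> E') \<and>
     (\<forall>e\<in>E. \<forall>f\<in>E. e \<noteq> f \<and> e \<inter> f \<noteq> {} \<longrightarrow> \<phi> ` e \<noteq> \<phi> ` f)"

definition in_L ::
  "'a set \<Rightarrow> 'a set set \<Rightarrow> 'a set \<Rightarrow> 'b set \<Rightarrow> 'b set set \<Rightarrow> 'b set \<Rightarrow> bool" where
  "in_L VT ET RT V' E' R' \<longleftrightarrow> rooted_graph V' E' R' \<and> (\<exists>\<phi>. local_iso VT ET RT V' E' R' \<phi>)"

end

theory Submission
  imports Defs
begin

(* Fix S in V(F) - R(F) and let W be its preimage under the local isomorphism phi.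
   Giving each v in W the weight 1/|phi^-1(phi v)| yields total weight |S|, and this
   fractional subset of V(T) - R(T) is a positive combination of its level sets.
   Applying rho(T) |A| <= e_A(T) to every level set A bounds rho(T) |S| by the sum, over
   the edges e of T meeting W, of the largest weight on e.  By local injectivity the
   edges of T lying over an edge f of F are at most as many as the vertices over any
   u in f, so those edges contribute at most 1 in total, whence rho(T) |S| <= e_S(F). *)

definition layer_weight :: "nat \<Rightarrow> nat \<Rightarrow> real" where
  "layer_weight N k = 1 / real k - (if k < N then 1 / real (Suc k) else 0)"

lemma layer_weight_pos:
  assumes "0 < k" "k \<le> N"
  shows "0 < layer_weight N k"
  using assms by (auto simp: layer_weight_def field_simps)

lemma sum_layer_weight:
  assumes "m \<le> N"
  shows "(\<Sum>k=m..N. layer_weight N k) = 1 / real m"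
  using assms
proof (induction m rule: inc_induct)
  case base
  show ?case by (simp add: layer_weight_def)
next
  case (step m)
  then have "{m..N} = insert m {Suc m..N}" by auto
  with step show ?case by (simp add: layer_weight_def)
qed

lemma layer_cake_reciprocal:
  fixes g :: "'a \<Rightarrow> nat"
  assumes "finite X" and "\<And>x. x \<in> X \<Longrightarrow> 0 < g x \<and> g x \<le> N"
  shows "(\<Sum>k=1..N. layer_weight N k * real (card {x\<in>X. g x \<le> k})) = (\<Sum>x\<in>X. 1 / real (g x))"
proof -
  have "(\<Sum>k=1..N. layer_weight N k * real (card {x\<in>X. g x \<le> k}))
      = (\<Sum>k=1..N. \<Sum>x\<in>X. if g x \<le> k then layer_weight N k else 0)"
    using \<open>finite X\<close> by (simp add: sum.If_cases Int_def conj_commute mult.commute)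
  also have "\<dots> = (\<Sum>x\<in>X. \<Sum>k=1..N. if g x \<le> k then layer_weight N k else 0)"
    by (rule sum.swap)
  also have "\<dots> = (\<Sum>x\<in>X. 1 / real (g x))"
  proof (rule sum.cong)
    fix x assume "x \<in> X"
    then have "{1..N} \<inter> {k. g x \<le> k} = {g x..N}" using assms(2)[of x] by auto
    then show "(\<Sum>k=1..N. if g x \<le> k then layer_weight N k else 0) = 1 / real (g x)"
      using assms(2) \<open>x \<in> X\<close> by (simp add: sum.If_cases sum_layer_weight)
  qed simp
  finally show ?thesis .
qed

lemma weighted_density_le:
  fixes E :: "'a set set" and n :: "'a \<Rightarrow> nat" and \<rho> :: real
  assumes "finite W" and "finite E" and n_pos: "\<And>v. v \<in> W \<Longrightarrow> 0 < n v"
    and density: "\<And>A. A \<noteq> {} \<Longrightarrow> A \<subseteq> W \<Longrightarrow> \<rho> * real (card A) \<le> real (e_S E A)"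
  shows "\<rho> * (\<Sum>v\<in>W. 1 / real (n v))
           \<le> (\<Sum>e\<in>{e\<in>E. e \<inter> W \<noteq> {}}. 1 / real (Min (n ` (e \<inter> W))))"
proof -
  define N where "N = Max (n ` W)"
  define A where "A k = {v\<in>W. n v \<le> k}" for k
  define E' where "E' = {e\<in>E. e \<inter> W \<noteq> {}}"
  define m where "m e = Min (n ` (e \<inter> W))" for e
  have n_bounds: "0 < n v \<and> n v \<le> N" if "v \<in> W" for v
    using that n_pos \<open>finite W\<close> by (simp add: N_def)
  have m_in: "m e \<in> n ` (e \<inter> W)" if "e \<in> E'" for e
    unfolding m_def using that \<open>finite W\<close> by (intro Min_in) (auto simp: E'_def)
  have m_bounds: "0 < m e \<and> m e \<le> N" if "e \<in> E'" for e
    using m_in[OF that] n_bounds by auto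
  have edges_meeting_A: "{e\<in>E. e \<inter> A k \<noteq> {}} = {e\<in>E'. m e \<le> k}" for k
  proof -
    have "m e \<le> k \<longleftrightarrow> (\<exists>v\<in>e \<inter> W. n v \<le> k)" if "e \<inter> W \<noteq> {}" for e
      unfolding m_def using that \<open>finite W\<close> by (simp add: Min_le_iff)
    then show ?thesis by (auto simp: A_def E'_def)
  qed
  have cake_W: "(\<Sum>k=1..N. layer_weight N k * real (card (A k))) = (\<Sum>v\<in>W. 1 / real (n v))"
    unfolding A_def using \<open>finite W\<close> n_bounds by (rule layer_cake_reciprocal)
  have "\<rho> * (\<Sum>v\<in>W. 1 / real (n v)) = (\<Sum>k=1..N. layer_weight N k * (\<rho> * real (card (A k))))"
    unfolding cake_W[symmetric] sum_distrib_left by (simp add: ac_simps)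
  also have "\<dots> \<le> (\<Sum>k=1..N. layer_weight N k * real (e_S E (A k)))"
  proof (rule sum_mono, rule mult_left_mono)
    fix k assume "k \<in> {1..N}"
    then show "0 \<le> layer_weight N k" using layer_weight_pos[of k N] by simp
    show "\<rho> * real (card (A k)) \<le> real (e_S E (A k))"
    proof (cases "A k = {}")
      case False
      then show ?thesis using density by (auto simp: A_def)
    qed (simp add: e_S_def)
  qed
  also have "\<dots> = (\<Sum>e\<in>E'. 1 / real (m e))"
    using layer_cake_reciprocal[of E' m N] \<open>finite E\<close> m_bounds
    by (simp add: e_S_def edges_meeting_A E'_def)
  finally show ?thesis by (simp add: E'_def m_def)
qed

lemma sum_inverse_card_fibres:
  fixes \<phi> :: "'a \<Rightarrow> 'b"
  assumes "finite V" and "S \<subseteq> \<phi> ` V"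
  shows "(\<Sum>v\<in>{v\<in>V. \<phi> v \<in> S}. 1 / real (card {w\<in>V. \<phi> w = \<phi> v})) = real (card S)"
proof -
  let ?W = "{v\<in>V. \<phi> v \<in> S}"
  have "(\<Sum>v\<in>?W. 1 / real (card {w\<in>V. \<phi> w = \<phi> v}))
      = (\<Sum>u\<in>\<phi> ` ?W. \<Sum>v\<in>{v\<in>?W. \<phi> v = u}. 1 / real (card {w\<in>V. \<phi> w = \<phi> v}))"
    using \<open>finite V\<close> by (intro sum.image_gen) simp
  also have "\<dots> = (\<Sum>u\<in>S. 1)"
  proof (rule sum.cong)
    show "\<phi> ` ?W = S" using assms(2) by blast
  next
    fix u assume "u \<in> S"
    then have fibre: "{v\<in>?W. \<phi> v = u} = {w\<in>V. \<phi> w = u}" by auto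
    have "{w\<in>V. \<phi> w = u} \<noteq> {}" using \<open>u \<in> S\<close> assms(2) by blast
    then show "(\<Sum>v\<in>{v\<in>?W. \<phi> v = u}. 1 / real (card {w\<in>V. \<phi> w = \<phi> v})) = 1"
      unfolding fibre using \<open>finite V\<close> by simp
  qed
  finally show ?thesis by simp
qed

lemma card_edges_over_le_card_fibre:
  assumes "finite V" and "\<And>e. e \<in> E \<Longrightarrow> e \<subseteq> V"
    and locally_inj: "\<And>e e'. e \<in> E \<Longrightarrow> e' \<in> E \<Longrightarrow> e \<noteq> e' \<Longrightarrow> e \<inter> e' \<noteq> {} \<Longrightarrow> \<phi> ` e \<noteq> \<phi> ` e'"
    and "u \<in> f"
  shows "card {e\<in>E. \<phi> ` e = f} \<le> card {v\<in>V. \<phi> v = u}"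
proof -
  define G where "G = {e\<in>E. \<phi> ` e = f}"
  define g where "g e = (SOME v. v \<in> e \<and> \<phi> v = u)" for e
  have g: "g e \<in> e \<and> \<phi> (g e) = u" if "e \<in> G" for e
  proof -
    have "\<exists>v. v \<in> e \<and> \<phi> v = u" using that \<open>u \<in> f\<close> by (auto simp: G_def)
    then show ?thesis unfolding g_def by (rule someI_ex)
  qed
  have "inj_on g G"
  proof (rule inj_onI)
    fix e e' assume "e \<in> G" "e' \<in> G" "g e = g e'"
    then have "g e \<in> e \<inter> e'" using g[of e] g[of e'] by simp
    then have "e \<inter> e' \<noteq> {}" by blast
    moreover have "e \<in> E" "e' \<in> E" "\<phi> ` e = \<phi> ` e'"
      using \<open>e \<in> G\<close> \<open>e' \<in> G\<close> by (simp_all add: G_def)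
    ultimately show "e = e'" using locally_inj by blast
  qed
  moreover have "g ` G \<subseteq> {v\<in>V. \<phi> v = u}"
  proof (rule image_subsetI)
    fix e assume "e \<in> G"
    then have "e \<subseteq> V" using assms(2) by (simp add: G_def)
    then show "g e \<in> {v\<in>V. \<phi> v = u}" using g[OF \<open>e \<in> G\<close>] by blast
  qed
  ultimately show ?thesis
    unfolding G_def[symmetric] using \<open>finite V\<close> by (intro card_inj_on_le) auto
qed

lemma graph_edge_subset:
  assumes "graph V E" and "e \<in> E"
  shows "e \<subseteq> V"
  using assms by (auto simp: graph_def)

lemma graph_finite_edges:
  assumes "graph V E"
  shows "finite E"
proof (rule finite_subset)
  show "E \<subseteq> Pow V" using graph_edge_subset[OF assms] by blast
  show "finite (Pow V)" using assms by (simp add: graph_def)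
qed

lemma local_iso_sum_edge_weights_le:
  fixes \<phi> :: "'a \<Rightarrow> 'b" and S :: "'b set"
  assumes T: "graph VT ET" and F: "graph VF EF" and \<phi>: "local_iso VT ET RT VF EF RF \<phi>"
  defines "W \<equiv> {v\<in>VT. \<phi> v \<in> S}" and "n \<equiv> \<lambda>v. card {w\<in>VT. \<phi> w = \<phi> v}"
  shows "(\<Sum>e\<in>{e\<in>ET. e \<inter> W \<noteq> {}}. 1 / real (Min (n ` (e \<inter> W)))) \<le> real (e_S EF S)"
proof -
  define E' where "E' = {e\<in>ET. e \<inter> W \<noteq> {}}"
  define c where "c u = card {w\<in>VT. \<phi> w = u}" for u
  have "finite VT" using T by (simp add: graph_def)
  have "finite E'" using graph_finite_edges[OF T] by (simp add: E'_def)
  have e_VT: "e \<subseteq> VT" if "e \<in> ET" for e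
    using graph_edge_subset[OF T that] .
  have n_image: "n ` (e \<inter> W) = c ` (\<phi> ` e \<inter> S)" if "e \<in> ET" for e
    using e_VT[OF that] by (auto simp: W_def n_def c_def)
  have image_edge: "\<phi> ` e \<in> {f\<in>EF. f \<inter> S \<noteq> {}}" if "e \<in> E'" for e
    using that \<phi> e_VT by (auto simp: E'_def W_def local_iso_def)
  have group_le: "(\<Sum>e\<in>{e\<in>E'. \<phi> ` e = f}. 1 / real (Min (n ` (e \<inter> W)))) \<le> 1"
    if "f \<in> (\<lambda>e. \<phi> ` e) ` E'" for f
  proof -
    obtain e0 where e0: "e0 \<in> E'" "f = \<phi> ` e0" using \<open>f \<in> _\<close> by blast
    have "f \<inter> S \<noteq> {}" using image_edge[OF e0(1)] e0(2) by simp
    have "e0 \<in> ET" using e0(1) by (simp add: E'_def)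
    then have "finite e0" using e_VT \<open>finite VT\<close> by (meson finite_subset)
    then have "finite (f \<inter> S)" using e0(2) by simp
    then have "Min (c ` (f \<inter> S)) \<in> c ` (f \<inter> S)" using \<open>f \<inter> S \<noteq> {}\<close> by (intro Min_in) auto
    then obtain u where u: "u \<in> f \<inter> S" "c u = Min (c ` (f \<inter> S))" by (metis imageE)
    have "0 < c u"
      using u(1) e0 e_VT \<open>finite VT\<close> by (auto simp: c_def E'_def card_gt_0_iff)
    have "card {e\<in>E'. \<phi> ` e = f} \<le> card {e\<in>ET. \<phi> ` e = f}"
      using graph_finite_edges[OF T] by (intro card_mono) (auto simp: E'_def)
    also have "\<dots> \<le> c u"
      unfolding c_def using \<open>finite VT\<close> e_VT u(1) \<phi>
      by (intro card_edges_over_le_card_fibre) (auto simp: local_iso_def)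
    finally have "card {e\<in>E'. \<phi> ` e = f} \<le> c u" .
    moreover have "Min (n ` (e \<inter> W)) = c u" if "e \<in> {e\<in>E'. \<phi> ` e = f}" for e
      using that u(2) n_image by (simp add: E'_def)
    ultimately show ?thesis using \<open>0 < c u\<close> by (simp add: divide_simps)
  qed
  have "(\<Sum>e\<in>E'. 1 / real (Min (n ` (e \<inter> W))))
      = (\<Sum>f\<in>(\<lambda>e. \<phi> ` e) ` E'. \<Sum>e\<in>{e\<in>E'. \<phi> ` e = f}. 1 / real (Min (n ` (e \<inter> W))))"
    using \<open>finite E'\<close> by (rule sum.image_gen)
  also have "\<dots> \<le> real (card ((\<lambda>e. \<phi> ` e) ` E'))"
    using sum_mono[OF group_le] by simp
  also have "\<dots> \<le> real (e_S EF S)"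
    unfolding e_S_def using image_edge graph_finite_edges[OF F]
    by (intro of_nat_mono card_mono) auto
  finally show ?thesis by (simp add: E'_def)
qed

lemma finite_rho_ratios:
  assumes "finite V"
  shows "finite {real (e_S E S) / real (card S) | S. S \<noteq> {} \<and> S \<subseteq> V - R}"
proof -
  have "finite {S. S \<noteq> {} \<and> S \<subseteq> V - R}"
    by (rule finite_subset[of _ "Pow V"]) (use assms in auto)
  then show ?thesis by (rule finite_image_set)
qed

lemma rho_mult_card_le:
  assumes "finite V" and "S \<noteq> {}" and "S \<subseteq> V - R"
  shows "rho V E R * real (card S) \<le> real (e_S E S)"
proof -
  have "rho V E R \<le> real (e_S E S) / real (card S)"
    unfolding rho_def
  proof (rule Min_le)
    show "finite {real (e_S E S) / real (card S) | S. S \<noteq> {} \<and> S \<subseteq> V - R}"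
      using \<open>finite V\<close> by (rule finite_rho_ratios)
    show "real (e_S E S) / real (card S) \<in> {real (e_S E S) / real (card S) | S. S \<noteq> {} \<and> S \<subseteq> V - R}"
      using assms(2,3) by blast
  qed
  moreover have "finite S" using assms(1,3) by (meson finite_Diff finite_subset)
  ultimately show ?thesis using assms(2) by (simp add: pos_le_divide_eq card_gt_0_iff)
qed

lemma le_rhoI:
  assumes "finite V" and "R \<subset> V"
    and "\<And>S. S \<noteq> {} \<Longrightarrow> S \<subseteq> V - R \<Longrightarrow> x * real (card S) \<le> real (e_S E S)"
  shows "x \<le> rho V E R"
  unfolding rho_def
proof (rule Min.boundedI)
  show "finite {real (e_S E S) / real (card S) | S. S \<noteq> {} \<and> S \<subseteq> V - R}"
    using \<open>finite V\<close> by (rule finite_rho_ratios)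
  show "{real (e_S E S) / real (card S) | S. S \<noteq> {} \<and> S \<subseteq> V - R} \<noteq> {}"
    using \<open>R \<subset> V\<close> by blast
next
  fix r assume "r \<in> {real (e_S E S) / real (card S) | S. S \<noteq> {} \<and> S \<subseteq> V - R}"
  then obtain S where S: "S \<noteq> {}" "S \<subseteq> V - R" and r: "r = real (e_S E S) / real (card S)"
    by blast
  have "finite S" using S(2) \<open>finite V\<close> by (meson finite_Diff finite_subset)
  then have "0 < card S" using S(1) by (simp add: card_gt_0_iff)
  then show "x \<le> r" using assms(3)[OF S] r by (simp add: pos_le_divide_eq)
qed

theorem proposition2p4:
  fixes VT :: "'a set" and ET :: "'a set set" and RT :: "'a set"
    and VF :: "'b set" and EF :: "'b set set" and RF :: "'b set"
  assumes "rooted_forest VT ET RT"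
    and "in_L VT ET RT VF EF RF"
  shows "rho VT ET RT \<le> rho VF EF RF"
proof -
  have T: "graph VT ET" and "finite VT"
    using assms(1) by (auto simp: rooted_forest_def forest_def graph_def)
  have F: "graph VF EF" and "finite VF" and "RF \<subset> VF"
    using assms(2) by (auto simp: in_L_def rooted_graph_def graph_def)
  obtain \<phi> where \<phi>: "local_iso VT ET RT VF EF RF \<phi>"
    using assms(2) by (auto simp: in_L_def)
  show ?thesis
  proof (rule le_rhoI[OF \<open>finite VF\<close> \<open>RF \<subset> VF\<close>])
    fix S assume "S \<noteq> {}" and S: "S \<subseteq> VF - RF"
    define W where "W = {v\<in>VT. \<phi> v \<in> S}"
    define n where "n v = card {w\<in>VT. \<phi> w = \<phi> v}" for v
    have "W \<subseteq> VT - RT" using S \<phi> by (auto simp: W_def local_iso_def)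
    have "S \<subseteq> \<phi> ` VT" using S \<phi> by (auto simp: local_iso_def)
    have "rho VT ET RT * real (card S) = rho VT ET RT * (\<Sum>v\<in>W. 1 / real (n v))"
      using sum_inverse_card_fibres[OF \<open>finite VT\<close> \<open>S \<subseteq> \<phi> ` VT\<close>] by (simp add: W_def n_def)
    also have "\<dots> \<le> (\<Sum>e\<in>{e\<in>ET. e \<inter> W \<noteq> {}}. 1 / real (Min (n ` (e \<inter> W))))"
    proof (rule weighted_density_le)
      show "finite W" "finite ET" using \<open>finite VT\<close> graph_finite_edges[OF T] by (simp_all add: W_def)
      show "0 < n v" if "v \<in> W" for v
        using that \<open>finite VT\<close> by (auto simp: W_def n_def card_gt_0_iff)
      show "rho VT ET RT * real (card A) \<le> real (e_S ET A)" if "A \<noteq> {}" "A \<subseteq> W" for A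
        using that \<open>W \<subseteq> VT - RT\<close> \<open>finite VT\<close> by (intro rho_mult_card_le) auto
    qed
    also have "\<dots> \<le> real (e_S EF S)"
      unfolding W_def n_def by (rule local_iso_sum_edge_weights_le[OF T F \<phi>])
    finally show "rho VT ET RT * real (card S) \<le> real (e_S EF S)" .
  qed
qed

end
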